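(* Let $M_1,M_2$ be modules in the class $\mathcal C$ with structural exact sequences $0\to\operatorname{Lie}_E(K_\infty)/\Lambda_s\xrightarrow{\iota_s}M_s\to H_s\to0$ ($s=1,2$). Let $\Gamma:K_\infty^n\to K_\infty^n$ be an $\mathbb{F}_q[G]$-linear map given by an everywhere convergent power series \[\Gamma(\mathbf z)=\mathbf z+D_1\mathbf z^{(1)}+D_2\mathbf z^{(2)}+\cdots,\qquad D_i\in M_n(K_\infty),\] where $\mathbf z^{(i)}$ denotes the entrywise $q^i$-th power. Assume $\Gamma(\Lambda_1)\subseteq\Lambda_2$, let $\widetilde\Gamma:K_\infty^n/\Lambda_1\to K_\infty^n/\Lambda_2$ be the induced map, and let $\gamma:M_1\to M_2$ be a continuous $\mathbb{F}_q[G]$-linear morphism with $\iota_2^{-1}\circ\gamma\circ\iota_1=\widetilde\Gamma$ on $t^{-\ell}\mathcal{O}_{K_\infty}^n$. Then $\gamma$ is infinitely tangent to the identity.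
   Context: Let $p$ be a prime, $q$ a power of $p$, $A=\mathbb F_q[t]$, $k=\mathbb F_q(t)$, $k_\infty=\mathbb F_q((t^{-1}))$. Let $F/k$ be finite separable and $K/F$ finite Galois with abelian group $G$; $K_\infty=K\otimes_kk_\infty$, $F_\infty=F\otimes_kk_\infty$. $E$ is an $n$-dimensional $t$-module over the integral closure $\mathcal O_F$ of $A$ in $F$: $\phi_E:A\to M_n(\mathcal O_F)\{\tau\}$ with $\phi_E(t)=d_E[t]+\sum_{i\ge1}M_i\tau^i$ (finite sum), $d_E[t]=tI_n+N$, $N$ nilpotent; $\operatorname{Lie}_E(K_\infty)$ is $K_\infty^n$ with $a\in A$ acting by the $\tau^0$-coefficient $d_E[a]$ of $\phi_E(a)$, a $k_\infty[G]$-module. An $A[G]$-lattice is an $A[G]$-submodule of $\operatorname{Lie}_E(K_\infty)$, free over $A$ of rank $\dim_{k_\infty}\operatorname{Lie}_E(K_\infty)$, spanning over $k_\infty$. The class $\mathcal C$ consists of compact $G$-cohomologically trivial $A[G]$-modules $M$ with an exact sequence of topological $A[G]$-modules $0\to\operatorname{Lie}_E(K_\infty)/\Lambda\xrightarrow{\iota}M\to H\to0$, $\Lambda$ an $A[G]$-lattice, $H$ finite. Equip $K_\infty$ with the sup norm $\|\cdot\|$ over its components normalized by $\|t\|=q$, extended to $K_\infty^n$ by the max over coordinates; $\mathcal O_{K_\infty}=\{x:\|x\|\le1\}$. Fix $\ell$ with $t^{-\ell}\mathcal O_{K_\infty}^n\cap\Lambda_s=0$ for $s=1,2$ and identify $t^{-i}\mathcal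 O_{K_\infty}^n$ ($i\ge\ell$) with its image in $M_s$ via $\iota_s$. A continuous $\mathbb F_q[G]$-linear $\gamma:M_1\to M_2$ is infinitely tangent to the identity if for every $N\ge0$ there is $i\ge\ell$ such that $\iota_2^{-1}\circ\gamma\circ\iota_1$ restricts to a bijective isometry $\gamma_i$ of $t^{-i}\mathcal O_{K_\infty}^n$ onto itself with $\|\gamma_i(x)-x\|\le q^{-N}\|x\|$ for all $x\in t^{-i}\mathcal O_{K_\infty}^n$. *)

theory Defs
  imports "HOL-Analysis.Analysis" "HOL-Computational_Algebra.Formal_Laurent_Series"
begin

text \<open>The finite field F_q is a finite field type 'f, q = CARD('f).
  k_infinity = F_q((1/t)) is 'f fls, the Laurent series in the uniformiser X = 1/t;
  hence t = fls_X_inv and t^(-i) = fls_X_intpow i.  K_infinity is an abstract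
  commutative ring 'K, a k_infinity-algebra via emb.  Vectors of K_infinity^n are
  'K^'n with 'n a finite index type (n = CARD('n)).\<close>

definition qF :: "'f::{field,finite} itself \<Rightarrow> real" where
  "qF _ = real CARD('f)"

definition absinf :: "'f::{field,finite} fls \<Rightarrow> real" where
  "absinf c = (if c = 0 then 0 else qF TYPE('f) powr (- of_int (fls_subdegree c)))"

text \<open>K_infinity = K (x)_k k_infinity = product over the places w above infinity of the
  completions K_w.  W is the finite family of the (normalised) component absolute values
  x \<mapsto> |x_w|_w, each extending absinf; nrm is the sup norm over the components;
  Bs is a k_infinity-basis of K_infinity; Gs is the (finite abelian) Galois group G,
  acting k_infinity-linearly on K_infinity.\<close>
definition Kinf_setting ::
  "('f::{field,finite} fls \<Rightarrow> 'K::comm_ring_1) \<Rightarrow> ('K \<Rightarrow> real) \<Rightarrow> ('K \<Rightarrow> real) set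
   \<Rightarrow> 'K list \<Rightarrow> ('K \<Rightarrow> 'K) set \<Rightarrow> bool" where
  "Kinf_setting emb nrm W Bs Gs \<longleftrightarrow>
     inj emb \<and> emb 1 = 1 \<and> (\<forall>a b. emb (a + b) = emb a + emb b \<and> emb (a * b) = emb a * emb b)
   \<and> finite W \<and> W \<noteq> {}
   \<and> (\<forall>v\<in>W. (\<forall>x. 0 \<le> v x) \<and> (\<forall>x y. v (x * y) = v x * v y)
              \<and> (\<forall>x y. v (x + y) \<le> max (v x) (v y)) \<and> (\<forall>c. v (emb c) = absinf c))
   \<and> (\<forall>x. x \<noteq> 0 \<longrightarrow> (\<exists>v\<in>W. v x \<noteq> 0))
   \<and> (\<forall>x. nrm x = Max ((\<lambda>v. v x) ` W))
   \<and> (\<forall>X::nat \<Rightarrow> 'K. (\<forall>e>0. \<exists>M. \<forall>m\<ge>M. \<forall>k\<ge>M. nrm (X m - X k) < e)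
        \<longrightarrow> (\<exists>L. \<forall>e>0. \<exists>M. \<forall>m\<ge>M. nrm (X m - L) < e))
   \<and> (\<forall>x. \<exists>!c. length c = length Bs \<and> x = (\<Sum>j<length Bs. emb (c ! j) * Bs ! j))
   \<and> finite Gs \<and> id \<in> Gs
   \<and> (\<forall>\<sigma>\<in>Gs. \<forall>\<rho>\<in>Gs. \<sigma> \<circ> \<rho> \<in> Gs \<and> \<sigma> \<circ> \<rho> = \<rho> \<circ> \<sigma>)
   \<and> (\<forall>\<sigma>\<in>Gs. bij \<sigma> \<and> inv \<sigma> \<in> Gs \<and> \<sigma> 1 = 1
        \<and> (\<forall>x y. \<sigma> (x + y) = \<sigma> x + \<sigma> y \<and> \<sigma> (x * y) = \<sigma> x * \<sigma> y)
        \<and> (\<forall>c. \<sigma> (emb c) = emb c))"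

definition vnorm :: "('K \<Rightarrow> real) \<Rightarrow> 'K^'n::finite \<Rightarrow> real" where
  "vnorm nrm x = Max (range (\<lambda>j. nrm (x $ j)))"

definition tball :: "('f::{field,finite} fls \<Rightarrow> 'K::comm_ring_1) \<Rightarrow> ('K \<Rightarrow> real) \<Rightarrow> int
    \<Rightarrow> ('K^'n::finite) set" where
  "tball emb nrm i = {emb (fls_X_intpow i) *s y | y. vnorm nrm y \<le> 1}"

definition Kopen :: "('K::comm_ring_1 \<Rightarrow> real) \<Rightarrow> ('K^'n::finite) set \<Rightarrow> bool" where
  "Kopen nrm U \<longleftrightarrow> (\<forall>x\<in>U. \<exists>e>0. \<forall>y. vnorm nrm (y - x) < e \<longrightarrow> y \<in> U)"

definition gvec :: "('K \<Rightarrow> 'K) \<Rightarrow> 'K^'n::finite \<Rightarrow> 'K^'n" where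
  "gvec \<sigma> x = (\<chi> j. \<sigma> (x $ j))"

definition frobv :: "'f::{field,finite} itself \<Rightarrow> nat \<Rightarrow> 'K::comm_ring_1^'n::finite \<Rightarrow> 'K^'n" where
  "frobv _ i z = (\<chi> j. (z $ j) ^ (CARD('f) ^ i))"

text \<open>d_E[t] = t I_n + N, and the action of a in A = F_q[t] on Lie_E(K_infinity):
  d_E[a] = sum_k a_k d_E[t]^k.\<close>
definition dEt :: "('f::{field,finite} fls \<Rightarrow> 'K::comm_ring_1) \<Rightarrow> 'K^'n^'n \<Rightarrow> 'K^'n^'n::finite" where
  "dEt emb N = (\<chi> i j. (if i = j then emb fls_X_inv else 0) + N $ i $ j)"

definition dE :: "('f::{field,finite} fls \<Rightarrow> 'K::comm_ring_1) \<Rightarrow> 'K^'n^'n::finite \<Rightarrow> 'f poly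
    \<Rightarrow> 'K^'n \<Rightarrow> 'K^'n" where
  "dE emb N a x = (\<Sum>k\<le>degree a. emb (fls_const (coeff a k)) *s (((*v) (dEt emb N)) ^^ k) x)"

text \<open>A[G]-lattice in Lie_E(K_infinity): A[G]-submodule, free over A of rank
  dim_{k_infinity} Lie_E(K_infinity) = n * [K_infinity : k_infinity], spanning over k_infinity.\<close>
definition AG_lattice :: "('f::{field,finite} fls \<Rightarrow> 'K::comm_ring_1) \<Rightarrow> 'K^'n^'n::finite
    \<Rightarrow> 'K list \<Rightarrow> ('K \<Rightarrow> 'K) set \<Rightarrow> ('K^'n) set \<Rightarrow> bool" where
  "AG_lattice emb N Bs Gs \<Lambda> \<longleftrightarrow>
     0 \<in> \<Lambda> \<and> (\<forall>x\<in>\<Lambda>. \<forall>y\<in>\<Lambda>. x + y \<in> \<Lambda>)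
   \<and> (\<forall>a. \<forall>x\<in>\<Lambda>. dE emb N a x \<in> \<Lambda>)
   \<and> (\<forall>\<sigma>\<in>Gs. \<forall>x\<in>\<Lambda>. gvec \<sigma> x \<in> \<Lambda>)
   \<and> (\<exists>b::nat \<Rightarrow> 'K^'n. (\<forall>j<CARD('n) * length Bs. b j \<in> \<Lambda>)
        \<and> (\<forall>x\<in>\<Lambda>. \<exists>!a::nat \<Rightarrow> 'f poly. (\<forall>j\<ge>CARD('n) * length Bs. a j = 0)
              \<and> x = (\<Sum>j<CARD('n) * length Bs. dE emb N (a j) (b j))))
   \<and> (\<forall>x. \<exists>c::nat \<Rightarrow> 'f fls. \<exists>l::nat \<Rightarrow> 'K^'n. \<exists>m. (\<forall>j<m. l j \<in> \<Lambda>)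
        \<and> x = (\<Sum>j<m. emb (c j) *s l j))"

text \<open>Group cohomology of a subgroup H of G with coefficients in M (inhomogeneous cochains:
  functions on lists of group elements of length i).\<close>
definition merge_at :: "nat \<Rightarrow> ('K \<Rightarrow> 'K) list \<Rightarrow> ('K \<Rightarrow> 'K) list" where
  "merge_at j gs = take (j - 1) gs @ [gs ! (j - 1) \<circ> gs ! j] @ drop (j + 1) gs"

definition cobdry :: "(('K \<Rightarrow> 'K) \<Rightarrow> 'M::ab_group_add \<Rightarrow> 'M) \<Rightarrow> nat
    \<Rightarrow> (('K \<Rightarrow> 'K) list \<Rightarrow> 'M) \<Rightarrow> ('K \<Rightarrow> 'K) list \<Rightarrow> 'M" where
  "cobdry act i f gs = act (hd gs) (f (tl gs))
      + (\<Sum>j\<in>{1..i}. (if even j then f (merge_at j gs) else - f (merge_at j gs)))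
      + (if even (i + 1) then f (butlast gs) else - f (butlast gs))"

definition coh_vanishes :: "('K \<Rightarrow> 'K) set \<Rightarrow> (('K \<Rightarrow> 'K) \<Rightarrow> 'M::ab_group_add \<Rightarrow> 'M) \<Rightarrow> nat \<Rightarrow> bool" where
  "coh_vanishes H act i \<longleftrightarrow>
     (\<forall>f. (\<forall>gs. length gs = i + 1 \<and> set gs \<subseteq> H \<longrightarrow> cobdry act i f gs = 0)
       \<longrightarrow> (\<exists>h. \<forall>gs. length gs = i \<and> set gs \<subseteq> H \<longrightarrow> f gs = cobdry act (i - 1) h gs))"

text \<open>G-cohomologically trivial: for every subgroup H of G, the Tate group
  H^0 = M^H / N_H M vanishes and H^i(H,M) = 0 for all i >= 1.\<close>
definition cohom_trivial :: "('K \<Rightarrow> 'K) set \<Rightarrow> (('K \<Rightarrow> 'K) \<Rightarrow> 'M::ab_group_add \<Rightarrow> 'M) \<Rightarrow> bool" where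
  "cohom_trivial Gs act \<longleftrightarrow>
     (\<forall>H. H \<subseteq> Gs \<and> id \<in> H \<and> (\<forall>\<sigma>\<in>H. \<forall>\<rho>\<in>H. \<sigma> \<circ> \<rho> \<in> H \<and> inv \<sigma> \<in> H) \<longrightarrow>
        (\<forall>m. (\<forall>\<sigma>\<in>H. act \<sigma> m = m) \<longrightarrow> (\<exists>y. m = (\<Sum>\<sigma>\<in>H. act \<sigma> y)))
      \<and> (\<forall>i\<ge>1. coh_vanishes H act i))"

text \<open>M in the class C: compact, G-cohomologically trivial A[G]-module (A-action actA,
  G-action actG, continuous), with an exact sequence of topological A[G]-modules
  0 -> Lie_E(K_infinity)/Lambda --iota--> M -> H -> 0, H finite. iota is represented
  on K_infinity^n, with kernel exactly Lambda; exactness as topological modules: iota is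
  a continuous open map onto its image, which is open (H finite, quotient topology).\<close>
definition in_class_C :: "('f::{field,finite} fls \<Rightarrow> 'K::comm_ring_1) \<Rightarrow> ('K \<Rightarrow> real)
    \<Rightarrow> 'K^'n^'n::finite \<Rightarrow> 'K list \<Rightarrow> ('K \<Rightarrow> 'K) set
    \<Rightarrow> ('f poly \<Rightarrow> 'M::{ab_group_add,topological_space} \<Rightarrow> 'M) \<Rightarrow> (('K \<Rightarrow> 'K) \<Rightarrow> 'M \<Rightarrow> 'M)
    \<Rightarrow> ('K^'n) set \<Rightarrow> ('K^'n \<Rightarrow> 'M) \<Rightarrow> bool" where
  "in_class_C emb nrm N Bs Gs actA actG \<Lambda> \<iota> \<longleftrightarrow>
     compact (UNIV :: 'M set)
   \<and> (\<forall>a m m'. actA a (m + m') = actA a m + actA a m')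
   \<and> (\<forall>a b m. actA (a + b) m = actA a m + actA b m)
   \<and> (\<forall>a b m. actA (a * b) m = actA a (actA b m))
   \<and> (\<forall>m. actA 1 m = m)
   \<and> (\<forall>\<sigma>\<in>Gs. \<forall>m m'. actG \<sigma> (m + m') = actG \<sigma> m + actG \<sigma> m')
   \<and> (\<forall>\<sigma>\<in>Gs. \<forall>\<rho>\<in>Gs. \<forall>m. actG (\<sigma> \<circ> \<rho>) m = actG \<sigma> (actG \<rho> m))
   \<and> (\<forall>m. actG id m = m)
   \<and> (\<forall>\<sigma>\<in>Gs. \<forall>a m. actG \<sigma> (actA a m) = actA a (actG \<sigma> m))
   \<and> continuous_on UNIV (\<lambda>(m::'M, m'::'M). m + m')
   \<and> continuous_on UNIV (\<lambda>m::'M. - m)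
   \<and> (\<forall>a. continuous_on UNIV (actA a))
   \<and> (\<forall>\<sigma>\<in>Gs. continuous_on UNIV (actG \<sigma>))
   \<and> cohom_trivial Gs actG
   \<and> AG_lattice emb N Bs Gs \<Lambda>
   \<and> (\<forall>x y. \<iota> (x + y) = \<iota> x + \<iota> y)
   \<and> (\<forall>a x. \<iota> (dE emb N a x) = actA a (\<iota> x))
   \<and> (\<forall>\<sigma>\<in>Gs. \<forall>x. \<iota> (gvec \<sigma> x) = actG \<sigma> (\<iota> x))
   \<and> (\<forall>x y. \<iota> x = \<iota> y \<longleftrightarrow> x - y \<in> \<Lambda>)
   \<and> (\<forall>V. open V \<longrightarrow> Kopen nrm (\<iota> -` V))
   \<and> (\<forall>U. Kopen nrm U \<longrightarrow> open (\<iota> ` U))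
   \<and> finite ((\<lambda>m. {m + \<iota> x | x. True}) ` (UNIV :: 'M set))"

definition inf_tangent_id :: "('f::{field,finite} fls \<Rightarrow> 'K::comm_ring_1) \<Rightarrow> ('K \<Rightarrow> real) \<Rightarrow> int
    \<Rightarrow> ('K^'n::finite \<Rightarrow> 'M1) \<Rightarrow> ('K^'n \<Rightarrow> 'M2) \<Rightarrow> ('M1 \<Rightarrow> 'M2) \<Rightarrow> bool" where
  "inf_tangent_id emb nrm l \<iota>1 \<iota>2 \<gamma> \<longleftrightarrow>
     (\<forall>Nn::nat. \<exists>i\<ge>l. \<exists>g. bij_betw g (tball emb nrm i) (tball emb nrm i)
        \<and> (\<forall>x\<in>tball emb nrm i. \<gamma> (\<iota>1 x) = \<iota>2 (g x))
        \<and> (\<forall>x\<in>tball emb nrm i. \<forall>y\<in>tball emb nrm i. vnorm nrm (g x - g y) = vnorm nrm (x - y))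
        \<and> (\<forall>x\<in>tball emb nrm i. vnorm nrm (g x - x) \<le> qF TYPE('f) powr (- real Nn) * vnorm nrm x))"

end

(* Write \<Gamma> = id + h. Every term D_i z^(i) with i \<ge> 1 is at least quadratic in z, so the
   ultrametric sup norm gives |h x| \<le> C |x|^2 for |x| \<le> 1, and on the ball t^(-i) O^n of radius
   r = q^(-i) the additive map h shrinks norms by the factor C r, which is as small as we like.
   An additive perturbation of the identity by such a contraction is an isometry of the ball
   (ultrametric inequality) and maps it onto itself (the iteration x \<mapsto> y - h x converges, by
   completeness).  For i \<ge> l the map \<gamma> agrees with \<Gamma> on the ball, so \<Gamma> itself witnesses the
   tangency. *)

theory Submission
  imports Defs
begin

lemma component_le_vnorm: "nrm (x $ j) \<le> vnorm nrm (x :: 'a^'n::finite)"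
  unfolding vnorm_def by (rule Max_ge) auto

lemma vnorm_leI: "(\<And>j. nrm (x $ j) \<le> b) \<Longrightarrow> vnorm nrm (x :: 'a^'n::finite) \<le> b"
  unfolding vnorm_def by (subst Max_le_iff) auto

lemma vnorm_lessI: "(\<And>j. nrm (x $ j) < b) \<Longrightarrow> vnorm nrm (x :: 'a^'n::finite) < b"
  unfolding vnorm_def by (subst Max_less_iff) auto

definition vsums :: "('K::comm_ring_1 \<Rightarrow> real) \<Rightarrow> (nat \<Rightarrow> 'K^'n::finite) \<Rightarrow> 'K^'n \<Rightarrow> bool" where
  "vsums nrm T s \<longleftrightarrow> (\<forall>e>0. \<exists>m0. \<forall>m\<ge>m0. vnorm nrm ((\<Sum>i\<in>{1..m}. T i) - s) < e)"

lemma qF_gt_1: "1 < qF TYPE('f::{field,finite})"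
proof -
  have "card {0::'f, 1} \<le> CARD('f)" by (rule card_mono) auto
  then show ?thesis unfolding qF_def by simp
qed

lemma column_eq_mult_axis: "column j A = A *v axis j (1 :: 'a::comm_semiring_1)"
  by (simp add: matrix_vector_mult_def column_def axis_def vec_eq_iff if_distrib cong: if_cong)

lemma frobv_axis:
  "frobv TYPE('f::{field,finite}) k (axis j 1) = (axis j (1 :: 'K::comm_ring_1) :: 'K^'n::finite)"
  by (simp add: frobv_def axis_def vec_eq_iff power_0_left)

lemma mult_frobv_eq_sum_columns:
  "A *v frobv TYPE('f::{field,finite}) k x = (\<Sum>j\<in>UNIV. (x $ j ^ CARD('f) ^ k) *s column j A)"
  by (simp add: matrix_mult_sum frobv_def)

lemma ex_int_powr_neg_le:
  fixes q C eps :: real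
  assumes "1 < q" "0 < eps"
  shows "\<exists>i\<ge>l. 0 \<le> i \<and> C * q powr (- of_int i) \<le> eps"
proof -
  obtain m :: nat where m: "C / eps < q ^ m" using real_arch_pow assms(1) by blast
  define i where "i = max l 0 + int m"
  have "q powr (- of_int i) \<le> q powr (- real m)"
    using assms(1) by (intro powr_mono) (simp_all add: i_def)
  also have "\<dots> = 1 / q ^ m" using assms(1) by (simp add: powr_minus powr_realpow divide_inverse)
  finally have "max C 0 * q powr (- of_int i) \<le> max C 0 * (1 / q ^ m)"
    by (rule mult_left_mono) simp
  moreover have "C * q powr (- of_int i) \<le> max C 0 * q powr (- of_int i)"
    by (simp add: mult_right_mono)
  moreover have "max C 0 / q ^ m \<le> eps"
  proof -
    have "C \<le> eps * q ^ m" using m assms by (simp add: pos_divide_less_eq mult.commute)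
    then show ?thesis using assms by (simp add: pos_divide_le_eq)
  qed
  ultimately have "C * q powr (- of_int i) \<le> eps" by simp
  moreover have "l \<le> i" "0 \<le> i" by (simp_all add: i_def)
  ultimately show ?thesis by blast
qed

locale Kinf =
  fixes emb :: "'f::{field,finite} fls \<Rightarrow> 'K::comm_ring_1"
    and nrm :: "'K \<Rightarrow> real" and W :: "('K \<Rightarrow> real) set"
    and Bs :: "'K list" and Gs :: "('K \<Rightarrow> 'K) set"
  assumes setting: "Kinf_setting emb nrm W Bs Gs"
begin

lemma emb_1: "emb 1 = 1"
  and emb_mult: "emb (a * b) = emb a * emb b"
  and emb_0: "emb 0 = 0"
proof -
  show "emb 1 = 1" "emb (a * b) = emb a * emb b"
    using setting unfolding Kinf_setting_def by auto
  have "emb 0 = emb 0 + emb 0"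
    using setting unfolding Kinf_setting_def by (metis add_0)
  then show "emb 0 = 0" by simp
qed

lemma finite_W: "finite W" and W_nonempty: "W \<noteq> {}"
  and nrm_eq_Max: "nrm x = Max ((\<lambda>v. v x) ` W)"
  and W_separates: "x \<noteq> 0 \<Longrightarrow> \<exists>v\<in>W. v x \<noteq> 0"
  using setting unfolding Kinf_setting_def by auto

lemma component_nonneg: "v \<in> W \<Longrightarrow> 0 \<le> v x"
  and component_mult: "v \<in> W \<Longrightarrow> v (x * y) = v x * v y"
  and component_ultra: "v \<in> W \<Longrightarrow> v (x + y) \<le> max (v x) (v y)"
  and component_emb: "v \<in> W \<Longrightarrow> v (emb c) = absinf c"
  using setting unfolding Kinf_setting_def by auto

lemma component_le_nrm: "v \<in> W \<Longrightarrow> v x \<le> nrm x"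
  unfolding nrm_eq_Max using finite_W by (intro Max_ge) auto

lemma nrm_leI: "(\<And>v. v \<in> W \<Longrightarrow> v x \<le> b) \<Longrightarrow> nrm x \<le> b"
  unfolding nrm_eq_Max using finite_W W_nonempty by (subst Max_le_iff) auto

lemma component_minus:
  assumes v: "v \<in> W" shows "v (- x) = v x"
proof -
  have "v (-1) * v (-1) = 1"
    using component_mult[OF v, of "-1" "-1"] component_emb[OF v, of 1]
    by (simp add: emb_1 absinf_def qF_def)
  then have "(v (-1) - 1) * (v (-1) + 1) = 0" by (simp add: algebra_simps)
  moreover have "v (-1) + 1 \<noteq> 0" using component_nonneg[OF v, of "-1"] by simp
  ultimately have "v (-1) = 1" by simp
  then show ?thesis using component_mult[OF v, of "-1" x] by simp
qed

lemma nrm_nonneg: "0 \<le> nrm x"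
proof -
  obtain v where "v \<in> W" using W_nonempty by blast
  then show ?thesis using component_le_nrm component_nonneg order_trans by blast
qed

lemma nrm_ultra: "nrm (x + y) \<le> max (nrm x) (nrm y)"
  by (rule nrm_leI) (meson component_le_nrm component_ultra max.mono order_trans)

lemma nrm_mult_le: "nrm (x * y) \<le> nrm x * nrm y"
proof (rule nrm_leI)
  fix v assume v: "v \<in> W"
  show "v (x * y) \<le> nrm x * nrm y"
    unfolding component_mult[OF v]
    by (rule mult_mono[OF component_le_nrm[OF v] component_le_nrm[OF v] nrm_nonneg component_nonneg[OF v]])
qed

lemma nrm_emb: "nrm (emb c) = absinf c"
proof -
  have "(\<lambda>v. v (emb c)) ` W = {absinf c}" using component_emb W_nonempty by auto
  then show ?thesis by (simp add: nrm_eq_Max)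
qed

lemma nrm_1: "nrm 1 = 1"
  using nrm_emb[of 1] by (simp add: emb_1 absinf_def qF_def)

lemma nrm_minus: "nrm (- x) = nrm x"
  unfolding nrm_eq_Max by (metis (no_types, lifting) component_minus image_cong)

lemma nrm_eq_0_imp: "nrm x = 0 \<Longrightarrow> x = 0"
  using W_separates component_le_nrm component_nonneg by (metis order_antisym)

lemma nrm_power_le: "nrm (x ^ m) \<le> nrm x ^ m"
proof (induction m)
  case (Suc m)
  have "nrm (x ^ Suc m) \<le> nrm x * nrm (x ^ m)" using nrm_mult_le by simp
  also have "\<dots> \<le> nrm x * nrm x ^ m" using Suc nrm_nonneg by (simp add: mult_left_mono)
  finally show ?case by simp
qed (simp add: nrm_1)

lemma nrm_Cauchy_convergent:
  fixes X :: "nat \<Rightarrow> 'K"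
  assumes "\<forall>e>0. \<exists>M. \<forall>m\<ge>M. \<forall>k\<ge>M. nrm (X m - X k) < e"
  shows "\<exists>L. \<forall>e>0. \<exists>M. \<forall>m\<ge>M. nrm (X m - L) < e"
proof -
  have "\<forall>X::nat \<Rightarrow> 'K. (\<forall>e>0. \<exists>M. \<forall>m\<ge>M. \<forall>k\<ge>M. nrm (X m - X k) < e)
      \<longrightarrow> (\<exists>L. \<forall>e>0. \<exists>M. \<forall>m\<ge>M. nrm (X m - L) < e)"
    using setting unfolding Kinf_setting_def by blast
  then show ?thesis using assms by blast
qed

lemma vnorm_nonneg: "0 \<le> vnorm nrm x"
  using component_le_vnorm nrm_nonneg order_trans by blast

lemma vnorm_ultra: "vnorm nrm (x + y) \<le> max (vnorm nrm x) (vnorm nrm y)"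
proof (rule vnorm_leI)
  fix j
  have "nrm ((x + y) $ j) \<le> max (nrm (x $ j)) (nrm (y $ j))" using nrm_ultra by simp
  also have "\<dots> \<le> max (vnorm nrm x) (vnorm nrm y)" by (intro max.mono component_le_vnorm)
  finally show "nrm ((x + y) $ j) \<le> max (vnorm nrm x) (vnorm nrm y)" .
qed

lemma vnorm_minus: "vnorm nrm (- x) = vnorm nrm x"
  unfolding vnorm_def by (simp add: nrm_minus)

lemma vnorm_diff_le: "vnorm nrm (x - y) \<le> max (vnorm nrm x) (vnorm nrm y)"
  using vnorm_ultra[of x "- y"] by (simp add: vnorm_minus)

lemma vnorm_minus_commute: "vnorm nrm (x - y) = vnorm nrm (y - x)"
  using vnorm_minus[of "x - y"] by simp

lemma vnorm_0: "vnorm nrm 0 = 0"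
  using nrm_emb[of 0] by (simp add: vnorm_def emb_0 absinf_def)

lemma vnorm_eq_0_imp:
  assumes "vnorm nrm x = 0" shows "x = 0"
proof -
  have "nrm (x $ j) = 0" for j
    using component_le_vnorm[of nrm x j] nrm_nonneg[of "x $ j"] assms by simp
  then show ?thesis using nrm_eq_0_imp by (simp add: vec_eq_iff)
qed

lemma vnorm_smult_le: "vnorm nrm (a *s x) \<le> nrm a * vnorm nrm x"
proof (rule vnorm_leI)
  fix j
  have "nrm ((a *s x) $ j) \<le> nrm a * nrm (x $ j)" using nrm_mult_le by simp
  also have "\<dots> \<le> nrm a * vnorm nrm x" by (rule mult_left_mono[OF component_le_vnorm nrm_nonneg])
  finally show "nrm ((a *s x) $ j) \<le> nrm a * vnorm nrm x" .
qed

lemma vnorm_sum_le: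
  assumes "\<And>j. j \<in> A \<Longrightarrow> vnorm nrm (f j) \<le> b" "0 \<le> b"
  shows "vnorm nrm (sum f A) \<le> b"
  using assms
proof (induction A rule: infinite_finite_induct)
  case (insert a A)
  then have "vnorm nrm (f a) \<le> b" "vnorm nrm (sum f A) \<le> b" by simp_all
  then show ?case using vnorm_ultra[of "f a" "sum f A"] insert.hyps by simp
qed (simp_all add: vnorm_0)

lemma vnorm_add_small:
  assumes "vnorm nrm b \<le> eps * vnorm nrm a" "0 \<le> eps" "eps < 1"
  shows "vnorm nrm (a + b) = vnorm nrm a"
proof (cases "vnorm nrm a = 0")
  case True
  then show ?thesis using assms(1) vnorm_nonneg[of b] vnorm_eq_0_imp by fastforce
next
  case False
  then have "0 < vnorm nrm a" using vnorm_nonneg[of a] by simp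
  then have "eps * vnorm nrm a < vnorm nrm a" using assms(3) by simp
  with assms(1) have b_less: "vnorm nrm b < vnorm nrm a" by simp
  have "vnorm nrm a \<le> max (vnorm nrm (a + b)) (vnorm nrm b)"
    using vnorm_diff_le[of "a + b" b] by simp
  with b_less have "vnorm nrm a \<le> vnorm nrm (a + b)" by linarith
  moreover have "vnorm nrm (a + b) \<le> vnorm nrm a" using vnorm_ultra[of a b] b_less by simp
  ultimately show ?thesis by simp
qed

lemma tball_eq: "tball emb nrm i = {x. vnorm nrm x \<le> qF TYPE('f::{field,finite}) powr (- of_int i)}"
proof -
  have q_pos: "0 < qF TYPE('f)" by (rule less_trans[OF zero_less_one qF_gt_1])
  have nrm_X_intpow: "nrm (emb (fls_X_intpow j)) = qF TYPE('f) powr (- of_int j)" for j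
    by (simp add: nrm_emb absinf_def)
  show ?thesis
  proof (intro set_eqI iffI)
    fix x assume "x \<in> tball emb nrm i"
    then obtain y where x: "x = emb (fls_X_intpow i) *s y" and y: "vnorm nrm y \<le> 1"
      unfolding tball_def by auto
    have "vnorm nrm x \<le> qF TYPE('f) powr (- of_int i) * vnorm nrm y"
      unfolding x nrm_X_intpow[symmetric] by (rule vnorm_smult_le)
    also have "\<dots> \<le> qF TYPE('f) powr (- of_int i)" using y q_pos by (simp add: mult_left_le)
    finally show "x \<in> {x. vnorm nrm x \<le> qF TYPE('f) powr (- of_int i)}" by simp
  next
    fix x assume "x \<in> {x. vnorm nrm x \<le> qF TYPE('f) powr (- of_int i)}"
    then have x: "vnorm nrm x \<le> qF TYPE('f) powr (- of_int i)" by simp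
    define y where "y = emb (fls_X_intpow (- i)) *s x"
    have "vnorm nrm y \<le> qF TYPE('f) powr (of_int i) * vnorm nrm x"
      unfolding y_def using vnorm_smult_le[of "emb (fls_X_intpow (- i))" x] nrm_X_intpow[of "- i"]
      by simp
    also have "\<dots> \<le> qF TYPE('f) powr (of_int i) * qF TYPE('f) powr (- of_int i)"
      using x q_pos by (simp add: mult_left_mono)
    also have "\<dots> = 1" using q_pos by (simp add: powr_add[symmetric])
    finally have "vnorm nrm y \<le> 1" .
    moreover have "x = emb (fls_X_intpow i) *s y"
      unfolding y_def vector_smult_assoc emb_mult[symmetric] fls_X_intpow_times_fls_X_intpow
      by (simp add: emb_1)
    ultimately show "x \<in> tball emb nrm i" unfolding tball_def by blast
  qed
qed

lemma vnorm_Cauchy_convergent: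
  fixes X :: "nat \<Rightarrow> 'K^'n::finite"
  assumes Cauchy: "\<And>e. e > 0 \<Longrightarrow> \<exists>M. \<forall>m\<ge>M. \<forall>k\<ge>M. vnorm nrm (X m - X k) < e"
  shows "\<exists>L. \<forall>e>0. \<exists>M. \<forall>m\<ge>M. vnorm nrm (X m - L) < e"
proof -
  have "\<forall>j. \<exists>L. \<forall>e>0. \<exists>M. \<forall>m\<ge>M. nrm (X m $ j - L) < e"
  proof (intro allI nrm_Cauchy_convergent impI)
    fix j and e :: real assume "e > 0"
    then obtain M where M: "\<forall>m\<ge>M. \<forall>k\<ge>M. vnorm nrm (X m - X k) < e" using Cauchy by blast
    have "nrm (X m $ j - X k $ j) \<le> vnorm nrm (X m - X k)" for m k
      using component_le_vnorm[of nrm "X m - X k" j] by simp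
    with M show "\<exists>M. \<forall>m\<ge>M. \<forall>k\<ge>M. nrm (X m $ j - X k $ j) < e"
      using le_less_trans by blast
  qed
  then obtain L where L: "\<And>j e. e > 0 \<Longrightarrow> \<exists>M. \<forall>m\<ge>M. nrm (X m $ j - L j) < e"
    using choice[of "\<lambda>j L. \<forall>e>0. \<exists>M. \<forall>m\<ge>M. nrm (X m $ j - L) < e"] by blast
  have "\<exists>M. \<forall>m\<ge>M. vnorm nrm (X m - (\<chi> j. L j)) < e" if "e > 0" for e
  proof -
    have "eventually (\<lambda>m. \<forall>j. nrm (X m $ j - L j) < e) sequentially"
      using L[OF that] by (intro eventually_all_finite) (simp add: eventually_sequentially)
    then have "eventually (\<lambda>m. vnorm nrm (X m - (\<chi> j. L j)) < e) sequentially"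
      by (rule eventually_mono) (auto intro!: vnorm_lessI)
    then show ?thesis by (simp add: eventually_sequentially)
  qed
  then show ?thesis by blast
qed

lemma vnorm_limit_le:
  fixes X :: "nat \<Rightarrow> 'K^'n::finite"
  assumes bounded: "\<And>m. vnorm nrm (X m) \<le> r"
    and lim: "\<And>e. e > 0 \<Longrightarrow> \<exists>M. \<forall>m\<ge>M. vnorm nrm (X m - L) < e"
  shows "vnorm nrm L \<le> r"
proof (rule ccontr)
  assume "\<not> vnorm nrm L \<le> r"
  then have "0 < vnorm nrm L" using bounded[of 0] vnorm_nonneg[of "X 0"] by linarith
  then obtain M where M: "vnorm nrm (X M - L) < vnorm nrm L" using lim by blast
  have "vnorm nrm L \<le> max (vnorm nrm (X M)) (vnorm nrm (X M - L))"
    using vnorm_diff_le[of "X M" "X M - L"] by simp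
  then show False using M bounded[of M] \<open>\<not> vnorm nrm L \<le> r\<close> by linarith
qed

lemma vnorm_geometric_convergent:
  fixes X :: "nat \<Rightarrow> 'K^'n::finite"
  assumes steps: "\<And>n. vnorm nrm (X (Suc n) - X n) \<le> eps ^ n * r"
    and eps: "0 \<le> eps" "eps < 1"
  shows "\<exists>L. \<forall>e>0. \<exists>M. \<forall>m\<ge>M. vnorm nrm (X m - L) < e"
proof (rule vnorm_Cauchy_convergent)
  have r: "0 \<le> r" using steps[of 0] vnorm_nonneg[of "X 1 - X 0"] by simp
  have tail: "vnorm nrm (X m - X k) \<le> eps ^ k * r" if "k \<le> m" for m k
    using that
  proof (induction m rule: dec_induct)
    case base then show ?case using r eps by (simp add: vnorm_0)
  next
    case (step m)
    have "eps ^ m * r \<le> eps ^ k * r"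
      using step.hyps eps r by (simp add: mult_right_mono power_decreasing)
    then have "vnorm nrm (X (Suc m) - X m) \<le> eps ^ k * r" using steps[of m] by linarith
    then show ?case using vnorm_ultra[of "X (Suc m) - X m" "X m - X k"] step.IH by simp
  qed
  fix e :: real assume "e > 0"
  have "(\<lambda>k. eps ^ k * r) \<longlonglongrightarrow> 0"
    using eps by (intro tendsto_mult_left_zero LIMSEQ_power_zero) simp
  then have "eventually (\<lambda>k. eps ^ k * r < e) sequentially"
    using \<open>e > 0\<close> by (rule order_tendstoD(2))
  then obtain M where M: "\<And>k. k \<ge> M \<Longrightarrow> eps ^ k * r < e"
    unfolding eventually_sequentially by blast
  have "vnorm nrm (X m - X k) < e" if "m \<ge> M" "k \<ge> M" for m k
  proof (cases "k \<le> m")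
    case True
    then show ?thesis using tail[of k m] M[of k] that by simp
  next
    case False
    then show ?thesis using tail[of m k] M[of m] that vnorm_minus_commute[of "X m" "X k"] by simp
  qed
  then show "\<exists>M. \<forall>m\<ge>M. \<forall>k\<ge>M. vnorm nrm (X m - X k) < e" by blast
qed

context
  fixes h :: "'K^'n::finite \<Rightarrow> 'K^'n" and r eps :: real
  assumes h_diff: "\<And>x y. h (x - y) = h x - h y"
    and h_small: "\<And>x. vnorm nrm x \<le> r \<Longrightarrow> vnorm nrm (h x) \<le> eps * vnorm nrm x"
    and eps_nonneg: "0 \<le> eps" and eps_less_1: "eps < 1"
begin

lemma vnorm_perturbation_le: "vnorm nrm x \<le> r \<Longrightarrow> vnorm nrm (h x) \<le> vnorm nrm x"
  using h_small[of x] mult_right_mono[OF less_imp_le[OF eps_less_1] vnorm_nonneg[of x]] by simp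

lemma vnorm_add_perturbation: "vnorm nrm x \<le> r \<Longrightarrow> vnorm nrm (x + h x) = vnorm nrm x"
  using h_small eps_nonneg eps_less_1 by (rule vnorm_add_small)

lemma perturbed_identity_isometric:
  assumes "vnorm nrm x \<le> r" "vnorm nrm y \<le> r"
  shows "vnorm nrm ((x + h x) - (y + h y)) = vnorm nrm (x - y)"
proof -
  have "vnorm nrm (x - y) \<le> r" using vnorm_diff_le[of x y] assms by simp
  then have "vnorm nrm ((x - y) + h (x - y)) = vnorm nrm (x - y)" by (rule vnorm_add_perturbation)
  then show ?thesis by (simp add: h_diff algebra_simps)
qed

lemma perturbed_identity_surj:
  assumes y: "vnorm nrm y \<le> r"
  shows "\<exists>x. vnorm nrm x \<le> r \<and> x + h x = y"
proof -
  define X where "X n = ((\<lambda>x. y - h x) ^^ n) y" for n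
  have X_0: "X 0 = y" and X_Suc: "X (Suc n) = y - h (X n)" for n by (simp_all add: X_def)
  have X_ball: "vnorm nrm (X n) \<le> r" for n
  proof (induction n)
    case (Suc n)
    then show ?case
      using vnorm_diff_le[of y "h (X n)"] vnorm_perturbation_le[of "X n"] y by (simp add: X_Suc)
  qed (simp add: X_0 y)
  have steps: "vnorm nrm (X (Suc n) - X n) \<le> eps ^ n * r" for n
  proof (induction n)
    case 0
    then show ?case using vnorm_perturbation_le[OF y] vnorm_minus[of "h y"] y by (simp add: X_Suc X_0)
  next
    case (Suc n)
    have "X (Suc (Suc n)) - X (Suc n) = h (X n - X (Suc n))" by (simp add: X_Suc h_diff)
    moreover have "vnorm nrm (X n - X (Suc n)) \<le> r"
      using vnorm_diff_le[of "X n" "X (Suc n)"] X_ball[of n] X_ball[of "Suc n"] by simp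
    ultimately have "vnorm nrm (X (Suc (Suc n)) - X (Suc n)) \<le> eps * vnorm nrm (X n - X (Suc n))"
      using h_small by simp
    also have "\<dots> = eps * vnorm nrm (X (Suc n) - X n)"
      using vnorm_minus_commute[of "X n" "X (Suc n)"] by simp
    also have "\<dots> \<le> eps * (eps ^ n * r)" using Suc.IH eps_nonneg by (rule mult_left_mono)
    finally show ?case by simp
  qed
  obtain L where L: "\<And>e. e > 0 \<Longrightarrow> \<exists>M. \<forall>m\<ge>M. vnorm nrm (X m - L) < e"
    using vnorm_geometric_convergent[OF steps eps_nonneg eps_less_1] by blast
  have L_ball: "vnorm nrm L \<le> r" using X_ball L by (rule vnorm_limit_le)
  have "L + h L = y"
  proof (rule ccontr)
    define d where "d = vnorm nrm (y - (L + h L))"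
    assume "L + h L \<noteq> y"
    then have "0 < d" unfolding d_def using vnorm_nonneg vnorm_eq_0_imp
      by (metis eq_iff_diff_eq_0 order_le_less)
    then obtain M where M: "\<And>m. m \<ge> M \<Longrightarrow> vnorm nrm (X m - L) < d" using L by blast
    have "vnorm nrm (h (X M - L)) \<le> vnorm nrm (X M - L)"
      using vnorm_diff_le[of "X M" L] X_ball[of M] L_ball by (intro vnorm_perturbation_le) simp
    then have "vnorm nrm (h (X M - L)) < d" using M[of M] by simp
    moreover have "y - (L + h L) = (X (Suc M) - L) + h (X M - L)" by (simp add: X_Suc h_diff)
    then have "d \<le> max (vnorm nrm (X (Suc M) - L)) (vnorm nrm (h (X M - L)))"
      unfolding d_def by (simp only: vnorm_ultra)
    then show False using M[of "Suc M"] \<open>vnorm nrm (h (X M - L)) < d\<close> by simp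
  qed
  then show ?thesis using L_ball by blast
qed

lemma perturbed_identity_bij_betw:
  "bij_betw (\<lambda>x. x + h x) {x. vnorm nrm x \<le> r} {x. vnorm nrm x \<le> r}"
  unfolding bij_betw_def
proof
  show "inj_on (\<lambda>x. x + h x) {x. vnorm nrm x \<le> r}"
  proof (rule inj_onI)
    fix x y assume "x \<in> {x. vnorm nrm x \<le> r}" "y \<in> {x. vnorm nrm x \<le> r}" "x + h x = y + h y"
    then have "vnorm nrm (x - y) = 0" using perturbed_identity_isometric[of x y] by (simp add: vnorm_0)
    then show "x = y" using vnorm_eq_0_imp[of "x - y"] by simp
  qed
  show "(\<lambda>x. x + h x) ` {x. vnorm nrm x \<le> r} = {x. vnorm nrm x \<le> r}"
    using vnorm_add_perturbation perturbed_identity_surj by fastforce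
qed

end

lemma vsums_terms_bounded:
  assumes "vsums nrm T s"
  shows "\<exists>C. \<forall>k. vnorm nrm (T k) \<le> C"
proof -
  obtain m0 where m0: "\<And>m. m \<ge> m0 \<Longrightarrow> vnorm nrm ((\<Sum>i\<in>{1..m}. T i) - s) < 1"
    using assms unfolding vsums_def by (meson zero_less_one)
  have "vnorm nrm (T k) \<le> 1 + (\<Sum>i\<le>m0. vnorm nrm (T i))" for k
  proof (cases "k \<le> m0")
    case True
    then have "vnorm nrm (T k) \<le> (\<Sum>i\<le>m0. vnorm nrm (T i))"
      by (intro member_le_sum) (simp_all add: vnorm_nonneg)
    then show ?thesis by simp
  next
    case False
    then obtain k' where k: "k = Suc k'" and k': "k' \<ge> m0" by (cases k) auto
    have "T k = ((\<Sum>i\<in>{1..k}. T i) - s) - ((\<Sum>i\<in>{1..k'}. T i) - s)" by (simp add: k)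
    then have "vnorm nrm (T k) < 1" using vnorm_diff_le m0[of k] m0[of k'] k k'
      by (metis le_SucI max_less_iff_conj order_le_less_trans)
    moreover have "0 \<le> (\<Sum>i\<le>m0. vnorm nrm (T i))" by (simp add: sum_nonneg vnorm_nonneg)
    ultimately show ?thesis by linarith
  qed
  then show ?thesis by blast
qed

lemma vsums_vnorm_le:
  assumes sums: "vsums nrm T s" and terms: "\<And>k. k \<ge> 1 \<Longrightarrow> vnorm nrm (T k) \<le> B" and "0 \<le> B"
  shows "vnorm nrm s \<le> B"
proof (rule ccontr)
  assume "\<not> vnorm nrm s \<le> B"
  then obtain m where m: "vnorm nrm ((\<Sum>i\<in>{1..m}. T i) - s) < vnorm nrm s"
    using sums \<open>0 \<le> B\<close> unfolding vsums_def by (meson le_less_trans linorder_not_le order_refl)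
  have "vnorm nrm (\<Sum>i\<in>{1..m}. T i) \<le> B" using terms \<open>0 \<le> B\<close> by (intro vnorm_sum_le) simp_all
  moreover have "vnorm nrm s \<le> max (vnorm nrm (\<Sum>i\<in>{1..m}. T i)) (vnorm nrm ((\<Sum>i\<in>{1..m}. T i) - s))"
    using vnorm_diff_le[of "\<Sum>i\<in>{1..m}. T i" "(\<Sum>i\<in>{1..m}. T i) - s"] by simp
  ultimately show False using m \<open>\<not> vnorm nrm s \<le> B\<close> by linarith
qed

lemma frobenius_term_le:
  assumes columns: "\<And>j. vnorm nrm (column j A) \<le> C" and x: "vnorm nrm x \<le> 1" and "1 \<le> k"
  shows "vnorm nrm (A *v frobv TYPE('f::{field,finite}) k x) \<le> C * vnorm nrm x ^ 2"
proof -
  let ?Q = "CARD('f) ^ k"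
  have "2 \<le> CARD('f)" using qF_gt_1[where 'f='f] by (simp add: qF_def)
  moreover have "CARD('f) ^ 1 \<le> ?Q" using \<open>1 \<le> k\<close> by (intro power_increasing) simp_all
  ultimately have Q: "2 \<le> ?Q" by simp
  have C: "0 \<le> C" using columns[of undefined] vnorm_nonneg order_trans by blast
  show ?thesis
    unfolding mult_frobv_eq_sum_columns
  proof (intro vnorm_sum_le)
    fix j
    have "vnorm nrm ((x $ j ^ ?Q) *s column j A) \<le> nrm (x $ j ^ ?Q) * vnorm nrm (column j A)"
      by (rule vnorm_smult_le)
    also have "\<dots> \<le> nrm (x $ j) ^ ?Q * C"
      by (intro mult_mono nrm_power_le columns zero_le_power nrm_nonneg vnorm_nonneg)
    also have "\<dots> \<le> vnorm nrm x ^ ?Q * C"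
      using C by (intro mult_right_mono power_mono component_le_vnorm nrm_nonneg)
    also have "\<dots> \<le> vnorm nrm x ^ 2 * C"
      using C x Q vnorm_nonneg by (intro mult_right_mono power_decreasing) simp_all
    finally show "vnorm nrm ((x $ j ^ ?Q) *s column j A) \<le> C * vnorm nrm x ^ 2"
      by (simp add: mult.commute)
  qed (simp add: C)
qed

lemma frobenius_series_quadratic_remainder:
  assumes series: "\<And>z. vsums nrm (\<lambda>i. D i *v frobv TYPE('f::{field,finite}) i z) (\<Gamma> z - z)"
  shows "\<exists>C\<ge>0. \<forall>x. vnorm nrm x \<le> 1 \<longrightarrow> vnorm nrm (\<Gamma> x - x) \<le> C * vnorm nrm x ^ 2"
proof -
  have "\<forall>j. \<exists>Cj. \<forall>k. vnorm nrm (column j (D k)) \<le> Cj"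
    using vsums_terms_bounded[OF series[of "axis _ 1"]] by (simp add: frobv_axis column_eq_mult_axis)
  then obtain Cj where Cj: "\<And>j k. vnorm nrm (column j (D k)) \<le> Cj j"
    using choice[of "\<lambda>j Cj. \<forall>k. vnorm nrm (column j (D k)) \<le> Cj"] by blast
  define C where "C = Max (range Cj)"
  have "Cj j \<le> C" for j unfolding C_def by (rule Max_ge) simp_all
  then have columns: "vnorm nrm (column j (D k)) \<le> C" for j k using Cj order_trans by blast
  have "0 \<le> C" using columns vnorm_nonneg order_trans by blast
  moreover have "vnorm nrm (\<Gamma> x - x) \<le> C * vnorm nrm x ^ 2" if "vnorm nrm x \<le> 1" for x
  proof (rule vsums_vnorm_le[OF series])
    show "vnorm nrm (D k *v frobv TYPE('f) k x) \<le> C * vnorm nrm x ^ 2" if "1 \<le> k" for k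
      using columns \<open>vnorm nrm x \<le> 1\<close> that by (rule frobenius_term_le)
  qed (simp add: \<open>0 \<le> C\<close>)
  ultimately show ?thesis by blast
qed

lemma quadratic_remainder_bij_isometry:
  assumes Gamma_diff: "\<And>x y. \<Gamma> (x - y) = \<Gamma> x - \<Gamma> y"
    and remainder: "\<And>x. vnorm nrm x \<le> 1 \<Longrightarrow> vnorm nrm (\<Gamma> x - x) \<le> C * vnorm nrm x ^ 2"
    and "0 \<le> C" "r \<le> 1" "C * r \<le> eps" "0 \<le> eps" "eps < 1"
  shows "bij_betw \<Gamma> {x. vnorm nrm x \<le> r} {x. vnorm nrm x \<le> r}"
    and "\<And>x y. vnorm nrm x \<le> r \<Longrightarrow> vnorm nrm y \<le> r \<Longrightarrow> vnorm nrm (\<Gamma> x - \<Gamma> y) = vnorm nrm (x - y)"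
    and "\<And>x. vnorm nrm x \<le> r \<Longrightarrow> vnorm nrm (\<Gamma> x - x) \<le> eps * vnorm nrm x"
proof -
  show small: "vnorm nrm (\<Gamma> x - x) \<le> eps * vnorm nrm x" if "vnorm nrm x \<le> r" for x
  proof -
    have "vnorm nrm (\<Gamma> x - x) \<le> (C * vnorm nrm x) * vnorm nrm x"
      using remainder[of x] that \<open>r \<le> 1\<close> by (simp add: power2_eq_square mult.assoc)
    also have "\<dots> \<le> (C * r) * vnorm nrm x"
      using that \<open>0 \<le> C\<close> vnorm_nonneg by (intro mult_right_mono mult_left_mono) simp_all
    also have "\<dots> \<le> eps * vnorm nrm x"
      using \<open>C * r \<le> eps\<close> vnorm_nonneg by (rule mult_right_mono)
    finally show ?thesis .
  qed
  have h_diff: "\<Gamma> (x - y) - (x - y) = (\<Gamma> x - x) - (\<Gamma> y - y)" for x y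
    by (simp add: Gamma_diff)
  have Gamma_eq: "\<Gamma> = (\<lambda>x. x + (\<Gamma> x - x))" by simp
  show "bij_betw \<Gamma> {x. vnorm nrm x \<le> r} {x. vnorm nrm x \<le> r}"
    by (subst Gamma_eq, rule perturbed_identity_bij_betw) (use h_diff small assms in auto)
  show "vnorm nrm (\<Gamma> x - \<Gamma> y) = vnorm nrm (x - y)" if "vnorm nrm x \<le> r" "vnorm nrm y \<le> r" for x y
    using perturbed_identity_isometric[of "\<lambda>x. \<Gamma> x - x", OF h_diff small assms(6,7) that] by simp
qed

lemma quadratic_remainder_tangent_on_tball:
  fixes \<Gamma> :: "'K^'n::finite \<Rightarrow> 'K^'n"
  assumes Gamma_diff: "\<And>x y. \<Gamma> (x - y) = \<Gamma> x - \<Gamma> y"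
    and remainder: "\<And>x. vnorm nrm x \<le> 1 \<Longrightarrow> vnorm nrm (\<Gamma> x - x) \<le> C * vnorm nrm x ^ 2"
    and "0 \<le> C" "0 < e"
  shows "\<exists>i\<ge>l. tball emb nrm i \<subseteq> (tball emb nrm l :: ('K^'n) set)
    \<and> bij_betw \<Gamma> (tball emb nrm i) (tball emb nrm i)
    \<and> (\<forall>x\<in>tball emb nrm i. \<forall>y\<in>tball emb nrm i. vnorm nrm (\<Gamma> x - \<Gamma> y) = vnorm nrm (x - y))
    \<and> (\<forall>x\<in>tball emb nrm i. vnorm nrm (\<Gamma> x - x) \<le> e * vnorm nrm x)"
proof -
  let ?q = "qF TYPE('f)"
  define eps where "eps = min e (1 / 2)"
  have eps: "0 < eps" "eps < 1" "eps \<le> e" using \<open>0 < e\<close> by (simp_all add: eps_def)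
  obtain i where "l \<le> i" "0 \<le> i" and radius_small: "C * ?q powr (- of_int i) \<le> eps"
    using ex_int_powr_neg_le[OF qF_gt_1 \<open>0 < eps\<close>] by blast
  define r where "r = ?q powr (- of_int i)"
  have radius: "r \<le> ?q powr (- of_int l)" "r \<le> ?q powr 0"
    unfolding r_def using qF_gt_1[where 'f='f] \<open>l \<le> i\<close> \<open>0 \<le> i\<close> by (intro powr_mono; simp)+
  then have "r \<le> 1" using qF_gt_1[where 'f='f] by simp
  have ball_i: "tball emb nrm i = {x. vnorm nrm x \<le> r}" by (simp add: tball_eq r_def)
  have sub: "tball emb nrm i \<subseteq> tball emb nrm l" unfolding tball_eq r_def[symmetric] using radius(1) by auto
  note Gamma_r = quadratic_remainder_bij_isometry[OF Gamma_diff remainder \<open>0 \<le> C\<close> \<open>r \<le> 1\<close>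
      radius_small[folded r_def] less_imp_le[OF eps(1)] eps(2), simplified]
  have "vnorm nrm (\<Gamma> x - x) \<le> e * vnorm nrm x" if "vnorm nrm x \<le> r" for x
    using Gamma_r(3)[OF that] mult_right_mono[OF eps(3) vnorm_nonneg] by (rule order_trans)
  then show ?thesis
    using Gamma_r(1,2) sub \<open>l \<le> i\<close> by (intro exI[of _ i]) (auto simp: ball_i)
qed

end

theorem mainTheorem13:
  fixes emb :: "'f::{field,finite} fls \<Rightarrow> 'K::comm_ring_1"
    and nrm :: "'K \<Rightarrow> real" and W :: "('K \<Rightarrow> real) set" and Bs :: "'K list"
    and Gs :: "('K \<Rightarrow> 'K) set" and N :: "'K^'n::finite^'n"
    and actA1 :: "'f poly \<Rightarrow> 'M1::{ab_group_add,topological_space} \<Rightarrow> 'M1"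
    and actG1 :: "('K \<Rightarrow> 'K) \<Rightarrow> 'M1 \<Rightarrow> 'M1"
    and actA2 :: "'f poly \<Rightarrow> 'M2::{ab_group_add,topological_space} \<Rightarrow> 'M2"
    and actG2 :: "('K \<Rightarrow> 'K) \<Rightarrow> 'M2 \<Rightarrow> 'M2"
    and \<Lambda>1 \<Lambda>2 :: "('K^'n) set" and \<iota>1 :: "'K^'n \<Rightarrow> 'M1" and \<iota>2 :: "'K^'n \<Rightarrow> 'M2"
    and D :: "nat \<Rightarrow> 'K^'n^'n" and \<Gamma> :: "'K^'n \<Rightarrow> 'K^'n"
    and \<gamma> :: "'M1 \<Rightarrow> 'M2" and l :: int
  assumes setting: "Kinf_setting emb nrm W Bs Gs"
    and N_nilp: "\<exists>k. ((*v) N ^^ k) = (\<lambda>_. 0)"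
    and N_G: "\<forall>\<sigma>\<in>Gs. \<forall>i j. \<sigma> (N $ i $ j) = N $ i $ j"
    and M1C: "in_class_C emb nrm N Bs Gs actA1 actG1 \<Lambda>1 \<iota>1"
    and M2C: "in_class_C emb nrm N Bs Gs actA2 actG2 \<Lambda>2 \<iota>2"
    and l_ok: "tball emb nrm l \<inter> \<Lambda>1 = {0}" "tball emb nrm l \<inter> \<Lambda>2 = {0}"
    and Gamma_series: "\<forall>z. \<forall>e>0. \<exists>m0. \<forall>m\<ge>m0.
        vnorm nrm (z + (\<Sum>i\<in>{1..m}. D i *v frobv TYPE('f) i z) - \<Gamma> z) < e"
    and Gamma_add: "\<forall>x y. \<Gamma> (x + y) = \<Gamma> x + \<Gamma> y"
    and Gamma_Fq: "\<forall>c::'f. \<forall>x. \<Gamma> (emb (fls_const c) *s x) = emb (fls_const c) *s \<Gamma> x"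
    and Gamma_G: "\<forall>\<sigma>\<in>Gs. \<forall>x. \<Gamma> (gvec \<sigma> x) = gvec \<sigma> (\<Gamma> x)"
    and Gamma_lat: "\<Gamma> ` \<Lambda>1 \<subseteq> \<Lambda>2"
    and gamma_cont: "continuous_on UNIV \<gamma>"
    and gamma_add: "\<forall>m m'. \<gamma> (m + m') = \<gamma> m + \<gamma> m'"
    and gamma_Fq: "\<forall>c::'f. \<forall>m. \<gamma> (actA1 [:c:] m) = actA2 [:c:] (\<gamma> m)"
    and gamma_G: "\<forall>\<sigma>\<in>Gs. \<forall>m. \<gamma> (actG1 \<sigma> m) = actG2 \<sigma> (\<gamma> m)"
    and gamma_Gamma: "\<forall>x\<in>tball emb nrm l. \<gamma> (\<iota>1 x) = \<iota>2 (\<Gamma> x)"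
  shows "inf_tangent_id emb nrm l \<iota>1 \<iota>2 \<gamma>"
proof -
  interpret Kinf emb nrm W Bs Gs by (rule Kinf.intro[OF setting])
  have "vsums nrm (\<lambda>i. D i *v frobv TYPE('f) i z) (\<Gamma> z - z)" for z
    using Gamma_series unfolding vsums_def by (simp add: algebra_simps)
  then obtain C where "0 \<le> C"
    and remainder: "\<And>x. vnorm nrm x \<le> 1 \<Longrightarrow> vnorm nrm (\<Gamma> x - x) \<le> C * vnorm nrm x ^ 2"
    using frobenius_series_quadratic_remainder by blast
  have Gamma_diff: "\<Gamma> (x - y) = \<Gamma> x - \<Gamma> y" for x y
    using Gamma_add[rule_format, of "x - y" y] by (simp add: algebra_simps)
  show ?thesis
    unfolding inf_tangent_id_def
  proof
    fix Nn :: nat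
    have "0 < qF TYPE('f) powr - real Nn" using qF_gt_1[where 'f='f] by simp
    then obtain i where "l \<le> i" and sub: "tball emb nrm i \<subseteq> (tball emb nrm l :: ('K^'n) set)"
      and "bij_betw \<Gamma> (tball emb nrm i) (tball emb nrm i)"
      and "\<forall>x\<in>tball emb nrm i. \<forall>y\<in>tball emb nrm i. vnorm nrm (\<Gamma> x - \<Gamma> y) = vnorm nrm (x - y)"
      and "\<forall>x\<in>tball emb nrm i. vnorm nrm (\<Gamma> x - x) \<le> qF TYPE('f) powr - real Nn * vnorm nrm x"
      using quadratic_remainder_tangent_on_tball[OF Gamma_diff remainder \<open>0 \<le> C\<close>] by blast
    moreover have "\<forall>x\<in>tball emb nrm i. \<gamma> (\<iota>1 x) = \<iota>2 (\<Gamma> x)" using gamma_Gamma sub by blast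
    ultimately show "\<exists>i\<ge>l. \<exists>g. bij_betw g (tball emb nrm i) (tball emb nrm i)
        \<and> (\<forall>x\<in>tball emb nrm i. \<gamma> (\<iota>1 x) = \<iota>2 (g x))
        \<and> (\<forall>x\<in>tball emb nrm i. \<forall>y\<in>tball emb nrm i. vnorm nrm (g x - g y) = vnorm nrm (x - y))
        \<and> (\<forall>x\<in>tball emb nrm i. vnorm nrm (g x - x) \<le> qF TYPE('f) powr (- real Nn) * vnorm nrm x)"
      by blast
  qed
qed

end
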